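(* The function $\mathrm{gain}$, defined on collections of actively connected subsets of $V$, i.e. $\mathrm{gain}: 2^{\{S\subseteq V:\ S\text{ actively connected}\}}\to\mathbb{R}_{\ge0}$, is submodular.
   Context: Steiner Forest: finite undirected graph $G=(V,E)$, non-negative edge costs $(c_e)_{e\in E}$, set $\mathcal{D}$ of demand pairs $\{a,b\}\subseteq V$ (partners). For $U\subseteq V$, $\delta(U)$ is the set of edges with exactly one endpoint in $U$. The $\varepsilon$-extended moat-growing algorithm (fixed $\varepsilon\ge0$): time $t$ increases continuously from $0$ at unit rate; it maintains tight edges $F$ (initially empty), duals $y_S(t)\ge0$ (initially $0$), and budgets of components (initially $0$). $\mathcal{C}^t$ is the family of vertex sets of connected components of $(V,F)$. A component is demand-active if it contains a vertex not connected in $(V,F)$ to some partner; budget-active if not demand-active but with positive budget; active if either; $\mathcal{A}^t$ is the set of active components. Each $y_S$, $S\in\mathcal{A}^t$, grows at unit rate; budgets of demand-active components grow at rate $\varepsilon$ and of budget-active ones decrease at rate $1$; an edge $e$ with $\sum_{S:e\in\delta(S)}y_S(t)=c_e$ becomes tight and is added to $F$; merging components add budgets. The deactivation time $\tau_v$ of $v$ is the largest $t$ such that for all $s<t$, $v$ lies in a set of $\mathcal{A}^s$. Vertices $u,v$ are actively connected if for some $t$ they lie in a common set of $\mathcal{C}^t$ and $\tau_u,\tau_v\ge t$; this is an equivalence relation and a set is actively connected if contained in one equivalence class. For a collection $\mathcal{S}$ of actively connected sets, $\mathcal{A}^t/\mathcal{S}$ arises from $\mathcal{A}^t$ by merging sets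 of $\mathcal{A}^t$ into a single set whenever they are intersected by the same $S\in\mathcal{S}$ (transitively), and $\mathrm{gain}(\mathcal{S})=2\int_0^\infty(|\mathcal{A}^t|-|\mathcal{A}^t/\mathcal{S}|)\,dt$. *)

theory Defs
  imports "HOL-Analysis.Analysis"
begin

section \<open>Graphs: edges are 2-element vertex sets\<close>

definition cut_edges :: "'v set set \<Rightarrow> 'v set \<Rightarrow> 'v set set" where
  "cut_edges E U = {e \<in> E. card (e \<inter> U) = 1}"

definition edge_rel :: "'v set set \<Rightarrow> ('v \<times> 'v) set" where
  "edge_rel F = {(u, v). {u, v} \<in> F}"

definition comp_of :: "'v set \<Rightarrow> 'v set set \<Rightarrow> 'v \<Rightarrow> 'v set" where
  "comp_of V F v = {u \<in> V. (v, u) \<in> (edge_rel F)\<^sup>*}"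

definition components :: "'v set \<Rightarrow> 'v set set \<Rightarrow> 'v set set" where
  "components V F = comp_of V F ` V"

definition demand_active :: "'v set \<Rightarrow> 'v set set \<Rightarrow> 'v set set \<Rightarrow> 'v set \<Rightarrow> bool" where
  "demand_active V D F S \<longleftrightarrow>
     (\<exists>v\<in>S. \<exists>d\<in>D. v \<in> d \<and> (\<exists>u\<in>d. u \<noteq> v \<and> u \<notin> comp_of V F v))"

text \<open>F t: tight edges at time t; b t S: budget of component S at time t.\<close>

definition active_sets ::
  "'v set \<Rightarrow> 'v set set \<Rightarrow> (real \<Rightarrow> 'v set set) \<Rightarrow> (real \<Rightarrow> 'v set \<Rightarrow> real) \<Rightarrow> real \<Rightarrow> 'v set set" where
  "active_sets V D F b t =
     {S \<in> components V (F t). demand_active V D (F t) S \<or> (\<not> demand_active V D (F t) S \<and> b t S > 0)}"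

definition dual_y ::
  "'v set \<Rightarrow> 'v set set \<Rightarrow> (real \<Rightarrow> 'v set set) \<Rightarrow> (real \<Rightarrow> 'v set \<Rightarrow> real) \<Rightarrow> 'v set \<Rightarrow> real \<Rightarrow> real" where
  "dual_y V D F b S t = (LBINT s:{0..t}. (if S \<in> active_sets V D F b s then 1 else 0))"

text \<open>Budget dynamics: each demand-active component contributes rate epsilon, each budget-active
  component contributes rate -1, and merging adds budgets; hence the budget of a component S at
  time t is the integral over s \<le> t of these rates of the components at time s contained in S.\<close>
definition moat_run ::
  "'v set \<Rightarrow> 'v set set \<Rightarrow> ('v set \<Rightarrow> real) \<Rightarrow> 'v set set \<Rightarrow> real \<Rightarrow>
   (real \<Rightarrow> 'v set set) \<Rightarrow> (real \<Rightarrow> 'v set \<Rightarrow> real) \<Rightarrow> bool" where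
  "moat_run V E c D \<epsilon> F b \<longleftrightarrow>
     (\<forall>t s. 0 \<le> s \<longrightarrow> s \<le> t \<longrightarrow> F s \<subseteq> F t) \<and>
     (\<forall>t\<ge>0. F t = {e \<in> E. c e \<le> (\<Sum>S\<in>Pow V. if e \<in> cut_edges E S then dual_y V D F b S t else 0)}) \<and>
     (\<forall>t\<ge>0. \<forall>S\<in>components V (F t).
        b t S = (LBINT s:{0..t}.
            \<epsilon> * real (card {S' \<in> components V (F s). S' \<subseteq> S \<and> demand_active V D (F s) S'})
          - real (card {S' \<in> components V (F s). S' \<subseteq> S \<and> \<not> demand_active V D (F s) S' \<and> b s S' > 0})))"

definition deact_time ::
  "'v set \<Rightarrow> 'v set set \<Rightarrow> (real \<Rightarrow> 'v set set) \<Rightarrow> (real \<Rightarrow> 'v set \<Rightarrow> real) \<Rightarrow> 'v \<Rightarrow> ereal" where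
  "deact_time V D F b v =
     Sup {ereal t | t. 0 \<le> t \<and> (\<forall>s. 0 \<le> s \<and> s < t \<longrightarrow> (\<exists>S\<in>active_sets V D F b s. v \<in> S))}"

definition actively_connected ::
  "'v set \<Rightarrow> 'v set set \<Rightarrow> (real \<Rightarrow> 'v set set) \<Rightarrow> (real \<Rightarrow> 'v set \<Rightarrow> real) \<Rightarrow> 'v \<Rightarrow> 'v \<Rightarrow> bool" where
  "actively_connected V D F b u v \<longleftrightarrow>
     (\<exists>t\<ge>0. (\<exists>C\<in>components V (F t). u \<in> C \<and> v \<in> C) \<and>
            deact_time V D F b u \<ge> ereal t \<and> deact_time V D F b v \<ge> ereal t)"

definition actively_connected_set ::
  "'v set \<Rightarrow> 'v set set \<Rightarrow> (real \<Rightarrow> 'v set set) \<Rightarrow> (real \<Rightarrow> 'v set \<Rightarrow> real) \<Rightarrow> 'v set \<Rightarrow> bool" where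
  "actively_connected_set V D F b S \<longleftrightarrow>
     S \<subseteq> V \<and> (\<forall>u\<in>S. \<forall>v\<in>S. actively_connected V D F b u v)"

definition merge_rel :: "'v set set \<Rightarrow> 'v set set \<Rightarrow> ('v set \<times> 'v set) set" where
  "merge_rel A SS = {(X, Y). X \<in> A \<and> Y \<in> A \<and> (\<exists>S\<in>SS. S \<inter> X \<noteq> {} \<and> S \<inter> Y \<noteq> {})}"

definition merge_by :: "'v set set \<Rightarrow> 'v set set \<Rightarrow> 'v set set" where
  "merge_by A SS = (\<lambda>K. \<Union>K) ` (A // ((merge_rel A SS)\<^sup>*))"

definition gain ::
  "'v set \<Rightarrow> 'v set set \<Rightarrow> (real \<Rightarrow> 'v set set) \<Rightarrow> (real \<Rightarrow> 'v set \<Rightarrow> real) \<Rightarrow> 'v set set \<Rightarrow> real" where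
  "gain V D F b SS = 2 * (LBINT t:{0..}.
      real (card (active_sets V D F b t)) - real (card (merge_by (active_sets V D F b t) SS)))"

end

(*
  At a fixed time t, merging the active components along the sets of a family SS is the
  equivalence closure of one clique per S in SS (on the components that S meets). Adding a
  clique N lowers the number of classes by (number of classes meeting N) - 1, and the number
  of classes meeting N can only drop as the family grows. So the number of merged classes is
  supermodular in the family, and the integrand of gain is submodular at every t.

  Integration preserves the inequality once the integrals exist: the integrand is bounded;
  it is measurable because the tight edges grow monotonically through finitely many values and
  budgets are indefinite integrals; and it vanishes for large t, since every actively
  connected pair eventually lies in one component.
*)
theory Submission
  imports Defs
begin

section \<open>Equivalence closures of cliques\<close>

definition clique_rel :: "('s \<Rightarrow> 'b set) \<Rightarrow> 's set \<Rightarrow> ('b \<times> 'b) set" where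
  "clique_rel P SS = (\<Union>S\<in>SS. P S \<times> P S)"

lemma equiv_rtrancl_clique_rel: "equiv UNIV ((clique_rel P SS)\<^sup>*)"
proof (intro equivI refl_rtrancl sym_rtrancl trans_rtrancl)
  show "sym (clique_rel P SS)" unfolding clique_rel_def sym_def by blast
qed simp

lemma rtrancl_Un_rtrancl_left: "(Q\<^sup>* \<union> M)\<^sup>* = (Q \<union> M)\<^sup>*"
proof (rule rtrancl_subset)
  show "Q \<union> M \<subseteq> Q\<^sup>* \<union> M" by blast
  show "Q\<^sup>* \<union> M \<subseteq> (Q \<union> M)\<^sup>*" using rtrancl_mono[of Q "Q \<union> M"] by blast
qed

lemma rtrancl_clique_rel_insert:
  "(clique_rel P (insert S SS))\<^sup>* = ((clique_rel P SS)\<^sup>* \<union> P S \<times> P S)\<^sup>*"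
  unfolding rtrancl_Un_rtrancl_left by (simp add: clique_rel_def Un_commute)

lemma Image_rtrancl_Un_clique_disjoint:
  assumes R: "equiv UNIV R" and disj: "R `` {x} \<inter> N = {}"
  shows "(R \<union> N \<times> N)\<^sup>* `` {x} = R `` {x}"
proof -
  have "(x, z) \<in> R" if "(x, z) \<in> (R \<union> N \<times> N)\<^sup>*" for z
    using that
  proof (induction rule: rtrancl_induct)
    case base
    show ?case using R by (simp add: equiv_class_eq_iff)
  next
    case (step z w)
    with disj have "(z, w) \<in> R" by blast
    with step.IH show ?case using R by (simp add: equiv_class_eq_iff)
  qed
  then show ?thesis by blast
qed

lemma Image_rtrancl_Un_clique_meeting:
  assumes R: "equiv UNIV R" and y0: "y0 \<in> N" "(x, y0) \<in> R"
  shows "(R \<union> N \<times> N)\<^sup>* `` {x} = R `` N"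
proof -
  have sym: "(y, z) \<in> R \<Longrightarrow> (z, y) \<in> R" and trans: "(y, z) \<in> R \<Longrightarrow> (z, w) \<in> R \<Longrightarrow> (y, w) \<in> R"
    and refl: "(y, y) \<in> R" for y z w
    using R by (simp_all add: equiv_class_eq_iff)
  have "z \<in> R `` N" if "(x, z) \<in> (R \<union> N \<times> N)\<^sup>*" for z
    using that
  proof (induction rule: rtrancl_induct)
    case base
    from y0 sym show ?case by blast
  next
    case (step z w)
    then obtain y where "y \<in> N" "(y, z) \<in> R" by blast
    with step.hyps(2) show ?case using refl trans by blast
  qed
  moreover have "(x, z) \<in> (R \<union> N \<times> N)\<^sup>*" if "y \<in> N" "(y, z) \<in> R" for y z
  proof -
    have "(x, y0) \<in> (R \<union> N \<times> N)\<^sup>*" "(y0, y) \<in> (R \<union> N \<times> N)\<^sup>*" "(y, z) \<in> (R \<union> N \<times> N)\<^sup>*"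
      using y0 that by blast+
    then show ?thesis by (meson rtrancl_trans)
  qed
  ultimately show ?thesis by blast
qed

lemma Image_rtrancl_Un_clique:
  assumes "equiv UNIV R"
  shows "(R \<union> N \<times> N)\<^sup>* `` {x} = (if R `` {x} \<inter> N = {} then R `` {x} else R `` N)"
proof (cases "R `` {x} \<inter> N = {}")
  case True
  then show ?thesis using Image_rtrancl_Un_clique_disjoint[OF assms] by simp
next
  case False
  then obtain y0 where "y0 \<in> N" "(x, y0) \<in> R" by blast
  with False show ?thesis using Image_rtrancl_Un_clique_meeting[OF assms] by simp
qed

lemma card_quotient_Un_clique:
  assumes R: "equiv UNIV R" and A: "finite A" "N \<subseteq> A" "N \<noteq> {}"
  shows "card (A // (R \<union> N \<times> N)\<^sup>*) + card {K \<in> A // R. K \<inter> N \<noteq> {}} = card (A // R) + 1"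
proof -
  define Kd where "Kd = {K \<in> A // R. K \<inter> N = {}}"
  define Km where "Km = {K \<in> A // R. K \<inter> N \<noteq> {}}"
  have refl: "(y, y) \<in> R" for y using R by (simp add: equiv_class_eq_iff)
  have fin: "finite (A // R)" using A(1) by (simp add: quotient_def)
  have "A // R = Kd \<union> Km" "Kd \<inter> Km = {}" by (auto simp: Kd_def Km_def)
  then have split: "card (A // R) = card Kd + card Km"
    using fin by (simp add: card_Un_disjoint)
  obtain y0 where y0: "y0 \<in> N" using A(3) by blast
  have RN: "R `` N \<notin> Kd" using y0 refl by (auto simp: Kd_def)
  have "A // (R \<union> N \<times> N)\<^sup>* = insert (R `` N) Kd"
  proof
    show "A // (R \<union> N \<times> N)\<^sup>* \<subseteq> insert (R `` N) Kd"
      by (auto simp: quotient_def Kd_def Image_rtrancl_Un_clique[OF R] split: if_splits)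
    have "R `` N = (R \<union> N \<times> N)\<^sup>* `` {y0}"
      using y0 refl by (auto simp: Image_rtrancl_Un_clique[OF R])
    moreover have "y0 \<in> A" using y0 A(2) by auto
    ultimately have "R `` N \<in> A // (R \<union> N \<times> N)\<^sup>*" by (metis quotientI)
    moreover have "Kd \<subseteq> A // (R \<union> N \<times> N)\<^sup>*"
      by (auto simp: quotient_def Kd_def Image_rtrancl_Un_clique[OF R])
    ultimately show "insert (R `` N) Kd \<subseteq> A // (R \<union> N \<times> N)\<^sup>*" by blast
  qed
  then have "card (A // (R \<union> N \<times> N)\<^sup>*) = card Kd + 1"
    using RN fin by (simp add: Kd_def)
  then show ?thesis using split by (simp add: Km_def)
qed

lemma card_quotient_meeting_antimono:
  assumes R: "equiv UNIV R" and R': "equiv UNIV R'" and "R \<subseteq> R'"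
    and A: "finite A" "N \<subseteq> A"
  shows "card {K \<in> A // R'. K \<inter> N \<noteq> {}} \<le> card {K \<in> A // R. K \<inter> N \<noteq> {}}"
proof -
  have fin: "finite {K \<in> A // R. K \<inter> N \<noteq> {}}" using A(1) by (simp add: quotient_def)
  have "{K \<in> A // R'. K \<inter> N \<noteq> {}} \<subseteq> (\<lambda>K. R' `` K) ` {K \<in> A // R. K \<inter> N \<noteq> {}}"
  proof
    fix K' assume "K' \<in> {K \<in> A // R'. K \<inter> N \<noteq> {}}"
    then obtain x y where x: "x \<in> A" "K' = R' `` {x}" and y: "y \<in> N" "(x, y) \<in> R'"
      by (auto simp: quotient_def)
    have "K' = R' `` {y}"
      using x y R' equiv_class_eq by fastforce
    also have "\<dots> = R' `` (R `` {y})"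
      using R R' \<open>R \<subseteq> R'\<close> by (simp add: refines_equiv_class_eq2)
    finally show "K' \<in> (\<lambda>K. R' `` K) ` {K \<in> A // R. K \<inter> N \<noteq> {}}"
      using y A(2) R by (auto simp: quotient_def equiv_def refl_on_def)
  qed
  then show ?thesis using fin by (meson card_image_le card_mono finite_imageI le_trans)
qed

definition clique_class_count :: "'b set \<Rightarrow> ('s \<Rightarrow> 'b set) \<Rightarrow> 's set \<Rightarrow> nat" where
  "clique_class_count A P SS = card (A // (clique_rel P SS)\<^sup>*)"

lemma clique_class_count_insert_diminishing:
  assumes A: "finite A" "\<And>S. P S \<subseteq> A" and "W \<subseteq> Y"
  shows "int (clique_class_count A P Y) - int (clique_class_count A P (insert S Y))
       \<le> int (clique_class_count A P W) - int (clique_class_count A P (insert S W))"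
proof (cases "P S = {}")
  case True
  then have "clique_rel P (insert S X) = clique_rel P X" for X by (simp add: clique_rel_def)
  then show ?thesis by (simp add: clique_class_count_def)
next
  case False
  let ?meeting = "\<lambda>X. card {K \<in> A // (clique_rel P X)\<^sup>*. K \<inter> P S \<noteq> {}}"
  have step: "clique_class_count A P (insert S X) + ?meeting X = clique_class_count A P X + 1" for X
    unfolding clique_class_count_def rtrancl_clique_rel_insert
    by (rule card_quotient_Un_clique[OF equiv_rtrancl_clique_rel A False])
  have "(clique_rel P W)\<^sup>* \<subseteq> (clique_rel P Y)\<^sup>*"
    using \<open>W \<subseteq> Y\<close> by (intro rtrancl_mono) (auto simp: clique_rel_def)
  then have "?meeting Y \<le> ?meeting W"
    by (intro card_quotient_meeting_antimono equiv_rtrancl_clique_rel A)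
  then show ?thesis using step[of W] step[of Y] by linarith
qed

lemma clique_class_count_supermodular:
  assumes A: "finite A" "\<And>S. P S \<subseteq> A" and "finite TT"
  shows "clique_class_count A P SS + clique_class_count A P TT
       \<le> clique_class_count A P (SS \<union> TT) + clique_class_count A P (SS \<inter> TT)"
proof -
  have diminishing: "int (clique_class_count A P Y) - int (clique_class_count A P (Y \<union> U))
      \<le> int (clique_class_count A P W) - int (clique_class_count A P (W \<union> U))"
    if "finite U" "W \<subseteq> Y" for U W Y
    using that
  proof (induction U rule: finite_induct)
    case (insert S U)
    then have "W \<union> U \<subseteq> Y \<union> U" by blast
    from clique_class_count_insert_diminishing[where P = P and S = S, OF A this] insert
    show ?case by simp
  qed simp
  have "SS \<union> (TT - SS) = SS \<union> TT" "SS \<inter> TT \<union> (TT - SS) = TT" by blast+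
  with diminishing[of "TT - SS" "SS \<inter> TT" SS] \<open>finite TT\<close> show ?thesis by simp
qed

section \<open>Merging a partition along a family of sets\<close>

lemma merge_rel_eq_clique_rel: "merge_rel A SS = clique_rel (\<lambda>S. {X \<in> A. S \<inter> X \<noteq> {}}) SS"
  by (auto simp: merge_rel_def clique_rel_def)

lemma card_merge_by:
  assumes "{} \<notin> A" "disjoint A"
  shows "card (merge_by A SS) = clique_class_count A (\<lambda>S. {X \<in> A. S \<inter> X \<noteq> {}}) SS"
proof -
  let ?R = "(merge_rel A SS)\<^sup>*"
  have R: "equiv UNIV ?R" unfolding merge_rel_eq_clique_rel by (rule equiv_rtrancl_clique_rel)
  have "?R `` A = A" by (rule Image_closed_trancl) (auto simp: merge_rel_def)
  then have classes_in_A: "K \<subseteq> A" if "K \<in> A // ?R" for K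
    using that by (auto simp: quotient_def)
  have "inj_on Union (A // ?R)"
  proof (rule inj_onI)
    fix K1 K2 assume K1: "K1 \<in> A // ?R" and K2: "K2 \<in> A // ?R" and "\<Union>K1 = \<Union>K2"
    obtain X where X: "X \<in> A" "K1 = ?R `` {X}" using K1 by (rule quotientE)
    then have "X \<in> K1" by simp
    obtain v where "v \<in> X" using X(1) assms(1) by (metis ex_in_conv)
    with \<open>X \<in> K1\<close> \<open>\<Union>K1 = \<Union>K2\<close> obtain Y where Y: "Y \<in> K2" "v \<in> Y" by blast
    then have "Y = X"
      using classes_in_A[OF K2] X(1) \<open>v \<in> X\<close> assms(2) by (auto simp: disjoint_def)
    obtain X' where X': "K2 = ?R `` {X'}" using K2 by (rule quotientE)
    with Y(1) \<open>Y = X\<close> have "(X', X) \<in> ?R" by simp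
    with X(2) X' show "K1 = K2" using equiv_class_eq[OF R] by simp
  qed
  then show ?thesis
    by (simp add: merge_by_def clique_class_count_def card_image merge_rel_eq_clique_rel)
qed

lemma card_merge_by_le:
  assumes "finite A"
  shows "card (merge_by A SS) \<le> card A"
proof -
  have "card (merge_by A SS) \<le> card (A // (merge_rel A SS)\<^sup>*)"
    unfolding merge_by_def by (rule card_image_le) (simp add: assms quotient_def)
  also have "A // (merge_rel A SS)\<^sup>* = (\<lambda>x. (merge_rel A SS)\<^sup>* `` {x}) ` A"
    by (auto simp: quotient_def)
  also have "card \<dots> \<le> card A" by (rule card_image_le[OF assms])
  finally show ?thesis .
qed

definition merge_loss :: "'a set set \<Rightarrow> 'a set set \<Rightarrow> real" where
  "merge_loss A SS = real (card A) - real (card (merge_by A SS))"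

lemma merge_loss_submodular:
  assumes "finite A" "{} \<notin> A" "disjoint A" "finite TT"
  shows "merge_loss A (SS \<union> TT) + merge_loss A (SS \<inter> TT) \<le> merge_loss A SS + merge_loss A TT"
proof -
  have "card (merge_by A SS) + card (merge_by A TT)
      \<le> card (merge_by A (SS \<union> TT)) + card (merge_by A (SS \<inter> TT))"
    using clique_class_count_supermodular[where P = "\<lambda>S. {X \<in> A. S \<inter> X \<noteq> {}}", OF \<open>finite A\<close> _ \<open>finite TT\<close>]
    by (simp add: card_merge_by assms(2,3))
  from of_nat_mono[OF this, where 'a = real] show ?thesis
    unfolding merge_loss_def of_nat_add by linarith
qed

lemma merge_by_trivial:
  assumes "merge_rel A SS \<subseteq> Id"
  shows "merge_by A SS = A"
proof -
  have "(merge_rel A SS)\<^sup>* = Id"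
  proof
    show "(merge_rel A SS)\<^sup>* \<subseteq> Id" using rtrancl_mono[OF assms] by simp
  qed auto
  then show ?thesis by (auto simp: merge_by_def quotient_def)
qed

section \<open>Components and active sets\<close>

lemma comp_of_eq_if_mem:
  assumes "u \<in> comp_of V F w"
  shows "comp_of V F u = comp_of V F w"
proof -
  have wu: "(w, u) \<in> (edge_rel F)\<^sup>*" using assms by (simp add: comp_of_def)
  have "sym ((edge_rel F)\<^sup>*)"
    by (rule sym_rtrancl) (auto simp: edge_rel_def sym_def insert_commute)
  with wu have "(u, w) \<in> (edge_rel F)\<^sup>*" by (auto dest: symD)
  with wu show ?thesis unfolding comp_of_def by (auto intro: rtrancl_trans)
qed

lemma comp_of_mono:
  assumes "F \<subseteq> F'"
  shows "comp_of V F u \<subseteq> comp_of V F' u"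
proof -
  have "edge_rel F \<subseteq> edge_rel F'" using assms by (auto simp: edge_rel_def)
  then show ?thesis unfolding comp_of_def using rtrancl_mono by blast
qed

lemma components_subset_Pow: "components V F \<subseteq> Pow V"
  by (auto simp: components_def comp_of_def)

lemma empty_notin_components: "{} \<notin> components V F"
  by (auto simp: components_def comp_of_def)

lemma disjoint_components: "disjoint (components V F)"
  unfolding disjoint_def
proof (intro ballI impI)
  fix X Y assume "X \<in> components V F" "Y \<in> components V F" "X \<noteq> Y"
  then obtain x y where "X = comp_of V F x" "Y = comp_of V F y" by (auto simp: components_def)
  with \<open>X \<noteq> Y\<close> show "X \<inter> Y = {}" by (metis comp_of_eq_if_mem disjoint_iff)
qed

lemma active_sets_subset_components: "active_sets V D F b t \<subseteq> components V (F t)"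
  by (auto simp: active_sets_def)

lemma active_sets_subset_Pow: "active_sets V D F b t \<subseteq> Pow V"
  using active_sets_subset_components components_subset_Pow by blast

lemma finite_active_sets: "finite V \<Longrightarrow> finite (active_sets V D F b t)"
  using active_sets_subset_Pow by (rule finite_subset) simp

lemma empty_notin_active_sets: "{} \<notin> active_sets V D F b t"
  using active_sets_subset_components empty_notin_components by blast

lemma disjoint_active_sets: "disjoint (active_sets V D F b t)"
  using disjoint_components active_sets_subset_components by (rule pairwise_subset)

lemma moat_run_mono:
  assumes "moat_run V E c D \<epsilon> F b" "0 \<le> s" "s \<le> t"
  shows "F s \<subseteq> F t"
  using assms(1)[unfolded moat_run_def, THEN conjunct1, rule_format, OF assms(2,3)] .

lemma moat_run_tight_subset:
  assumes "moat_run V E c D \<epsilon> F b" "0 \<le> t"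
  shows "F t \<subseteq> E"
  unfolding assms(1)[unfolded moat_run_def, THEN conjunct2, THEN conjunct1, rule_format, OF assms(2)]
  by (rule Collect_subset)

section \<open>Measurability in time\<close>

lemma continuous_on_LBINT_upto:
  fixes g :: "real \<Rightarrow> real"
  assumes "set_integrable lborel {0..t1} g"
  shows "continuous_on {..t1} (\<lambda>t. LBINT s:{0..t}. g s)"
proof -
  have LBINT_eq: "integral {0..t} g = (LBINT s:{0..t}. g s)" if "t \<le> t1" for t
    using set_integrable_subset[OF assms, of "{0..t}"] that
    by (simp add: set_borel_integral_eq_integral(2))
  have "integral {0..t} g = 0" if "t \<le> 0" for t
    using that by (cases "t = 0") auto
  then have nonpositive: "continuous_on ({..t1} \<inter> {..0}) (\<lambda>t. integral {0..t} g)"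
    by (intro continuous_on_eq[OF continuous_on_const]) auto
  have nonnegative: "continuous_on {0..t1} (\<lambda>t. integral {0..t} g)"
    by (rule indefinite_integral_continuous_1) (rule set_borel_integral_eq_integral(1)[OF assms])
  have "continuous_on ({..t1} \<inter> {..0} \<union> {0..t1}) (\<lambda>t. integral {0..t} g)"
    by (rule continuous_on_closed_Un[OF _ _ nonpositive nonnegative]) (simp_all add: closed_Int)
  moreover have "{..t1} \<inter> {..0} \<union> {0..t1} = {..t1}" by auto
  ultimately have "continuous_on {..t1} (\<lambda>t. integral {0..t} g)" by simp
  then show ?thesis by (rule continuous_on_eq) (simp add: LBINT_eq)
qed

lemma borel_measurable_LBINT_upto:
  fixes g :: "real \<Rightarrow> real"
  shows "(\<lambda>t. LBINT s:{0..t}. g s) \<in> borel_measurable borel"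
proof -
  define T where "T = {t. set_integrable lborel {0..t} g}"
  define G where "G = (\<lambda>t. LBINT s:{0..t}. g s)"
  have T_down: "t' \<in> T" if "t \<in> T" "t' \<le> t" for t t'
    using that set_integrable_subset[of lborel "{0..t}" g "{0..t'}"] by (auto simp: T_def)
  then have "is_interval T" unfolding is_interval_1 by blast
  then have T_borel: "T \<in> sets borel" by (rule real_interval_borel_measurable)
  \<comment> \<open>the Bochner integral of a non-integrable function is 0\<close>
  have G_outside: "G t = 0" if "t \<notin> T" for t
    using that by (simp add: G_def T_def set_lebesgue_integral_def set_integrable_def not_integrable_integral_eq)
  have "continuous_on T G"
    unfolding continuous_on_eq_continuous_within
  proof
    fix t0 assume "t0 \<in> T"
    show "continuous (at t0 within T) G"
    proof (cases "\<exists>t1\<in>T. t0 < t1")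
      case True
      then obtain t1 where "t1 \<in> T" "t0 < t1" by blast
      then have "continuous_on {..t1} G"
        unfolding G_def by (intro continuous_on_LBINT_upto) (simp add: T_def)
      then have "isCont G t0"
        by (rule continuous_on_interior) (use \<open>t0 < t1\<close> in auto)
      then show ?thesis by (rule continuous_at_imp_continuous_within)
    next
      case False
      then have "T \<subseteq> {..t0}" by (auto simp: not_less)
      moreover have "continuous_on {..t0} G"
        unfolding G_def by (intro continuous_on_LBINT_upto) (use \<open>t0 \<in> T\<close> in \<open>simp add: T_def\<close>)
      ultimately have "continuous_on T G" by (rule continuous_on_subset[rotated])
      then show ?thesis using \<open>t0 \<in> T\<close> continuous_on_eq_continuous_within by blast
    qed
  qed
  then have "(\<lambda>t. indicator T t *\<^sub>R G t) \<in> borel_measurable borel"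
    by (rule borel_measurable_continuous_on_indicator[OF T_borel])
  moreover have "(\<lambda>t. indicator T t *\<^sub>R G t) = G"
    using G_outside by (auto simp: indicator_def fun_eq_iff)
  ultimately show ?thesis by (simp add: G_def)
qed

lemma sets_borel_monotone_finite_range:
  fixes F :: "real \<Rightarrow> 'a set"
  assumes "finite E" "\<And>t. 0 \<le> t \<Longrightarrow> F t \<subseteq> E" "\<And>s t. 0 \<le> s \<Longrightarrow> s \<le> t \<Longrightarrow> F s \<subseteq> F t"
  shows "{t \<in> {0..}. Q (F t)} \<in> sets borel"
proof -
  have interval: "is_interval {t \<in> {0..}. F t = G}" for G
    unfolding is_interval_1
  proof (intro ballI allI impI)
    fix s u t assume "s \<in> {t \<in> {0..}. F t = G}" "u \<in> {t \<in> {0..}. F t = G}" "s \<le> t \<and> t \<le> u"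
    with assms(3)[of s t] assms(3)[of t u] show "t \<in> {t \<in> {0..}. F t = G}" by auto
  qed
  have "{t \<in> {0..}. Q (F t)} = (\<Union>G \<in> {G \<in> Pow E. Q G}. {t \<in> {0..}. F t = G})"
    using assms(2) by auto
  also have "\<dots> \<in> sets borel"
    using assms(1) by (intro sets.finite_UN real_interval_borel_measurable interval) auto
  finally show ?thesis .
qed

lemma active_time_set_borel:
  assumes "finite E" "moat_run V E c D \<epsilon> F b"
  shows "{t \<in> {0..}. S \<in> active_sets V D F b t} \<in> sets borel"
proof -
  define rate where "rate s = \<epsilon> * real (card {S' \<in> components V (F s). S' \<subseteq> S \<and> demand_active V D (F s) S'})
    - real (card {S' \<in> components V (F s). S' \<subseteq> S \<and> \<not> demand_active V D (F s) S' \<and> b s S' > 0})" for s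
  have budget: "b t S = (LBINT s:{0..t}. rate s)" if "0 \<le> t" "S \<in> components V (F t)" for t
    unfolding rate_def
    using assms(2)[unfolded moat_run_def, THEN conjunct2, THEN conjunct2, rule_format, OF that] .
  have tight_set: "{t \<in> {0..}. Q (F t)} \<in> sets borel" for Q
  proof (rule sets_borel_monotone_finite_range[OF assms(1)])
    show "F t \<subseteq> E" if "0 \<le> t" for t using moat_run_tight_subset[OF assms(2) that] .
    show "F s \<subseteq> F t" if "0 \<le> s" "s \<le> t" for s t using moat_run_mono[OF assms(2) that] .
  qed
  have positive: "{t. 0 < (LBINT s:{0..t}. rate s)} \<in> sets borel"
    using borel_measurable_LBINT_upto[of rate] by (simp add: borel_measurable_iff_greater)
  have "{t \<in> {0..}. S \<in> active_sets V D F b t}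
      = {t \<in> {0..}. S \<in> components V (F t) \<and> demand_active V D (F t) S}
        \<union> ({t \<in> {0..}. S \<in> components V (F t) \<and> \<not> demand_active V D (F t) S}
           \<inter> {t. 0 < (LBINT s:{0..t}. rate s)})"
    using budget by (auto simp: active_sets_def)
  also have "\<dots> \<in> sets borel"
    by (intro sets.Un sets.Int tight_set positive)
  finally show ?thesis .
qed

lemma measurable_active_sets:
  assumes "finite V" "finite E" "moat_run V E c D \<epsilon> F b"
  shows "(\<lambda>t. active_sets V D F b t) \<in> measurable (restrict_space lborel {0..}) (count_space (Pow (Pow V)))"
proof -
  let ?M = "restrict_space lborel {0..}"
  have fin: "finite (Pow (Pow V))" using assms(1) by simp
  have active_S: "{t \<in> space ?M. S \<in> active_sets V D F b t} \<in> sets ?M" for S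
    using active_time_set_borel[OF assms(2,3), of S]
    by (simp add: sets_restrict_space_iff space_restrict_space subset_eq)
  show ?thesis unfolding measurable_count_space_eq2[OF fin]
  proof (intro conjI ballI)
    show "(\<lambda>t. active_sets V D F b t) \<in> space ?M \<rightarrow> Pow (Pow V)"
      using active_sets_subset_Pow by blast
    fix r assume r: "r \<in> Pow (Pow V)"
    have "active_sets V D F b t = r \<longleftrightarrow> (\<forall>S \<in> Pow V. S \<in> active_sets V D F b t \<longleftrightarrow> S \<in> r)" for t
      using active_sets_subset_Pow[of V D F b t] r by blast
    then have "(\<lambda>t. active_sets V D F b t) -` {r} \<inter> space ?M
        = {t \<in> space ?M. \<forall>S \<in> Pow V. S \<in> active_sets V D F b t \<longleftrightarrow> S \<in> r}"
      by blast
    also have "\<dots> \<in> sets ?M"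
    proof (rule sets.sets_Collect_finite_All)
      show "{t \<in> space ?M. S \<in> active_sets V D F b t \<longleftrightarrow> S \<in> r} \<in> sets ?M" for S
        using active_S[of S] sets.sets_Collect_neg[OF active_S[of S]] by (cases "S \<in> r") simp_all
    qed (use assms(1) in simp)
    finally show "(\<lambda>t. active_sets V D F b t) -` {r} \<inter> space ?M \<in> sets ?M" .
  qed
qed

section \<open>Integrability and submodularity of gain\<close>

lemma eventually_same_comp_of:
  assumes "moat_run V E c D \<epsilon> F b" "actively_connected V D F b u v"
  shows "eventually (\<lambda>t. comp_of V (F t) u = comp_of V (F t) v) at_top"
proof -
  from assms(2) obtain t0 C where t0: "0 \<le> t0" "C \<in> components V (F t0)" "u \<in> C" "v \<in> C"
    unfolding actively_connected_def by blast
  then obtain w where C: "C = comp_of V (F t0) w" by (auto simp: components_def)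
  show ?thesis
  proof (rule eventually_at_top_linorderI[of t0])
    fix t assume "t0 \<le> t"
    then have "C \<subseteq> comp_of V (F t) w"
      unfolding C using moat_run_mono[OF assms(1) t0(1)] by (intro comp_of_mono)
    with t0(3,4) show "comp_of V (F t) u = comp_of V (F t) v"
      by (metis comp_of_eq_if_mem subsetD)
  qed
qed

lemma eventually_merge_by_active_sets_trivial:
  assumes "finite V" "moat_run V E c D \<epsilon> F b" "XX \<subseteq> {S. actively_connected_set V D F b S}"
  shows "eventually (\<lambda>t. merge_by (active_sets V D F b t) XX = active_sets V D F b t) at_top"
proof -
  let ?P = "{p \<in> V \<times> V. actively_connected V D F b (fst p) (snd p)}"
  have "eventually (\<lambda>t. \<forall>p \<in> ?P. comp_of V (F t) (fst p) = comp_of V (F t) (snd p)) at_top"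
    using assms(1) eventually_same_comp_of[OF assms(2)] by (intro eventually_ball_finite) auto
  then show ?thesis
  proof (rule eventually_mono)
    fix t assume same: "\<forall>p \<in> ?P. comp_of V (F t) (fst p) = comp_of V (F t) (snd p)"
    show "merge_by (active_sets V D F b t) XX = active_sets V D F b t"
    proof (rule merge_by_trivial, rule subsetI)
      fix p assume "p \<in> merge_rel (active_sets V D F b t) XX"
      then obtain X Y S where p: "p = (X, Y)"
        and "X \<in> active_sets V D F b t" "Y \<in> active_sets V D F b t"
        and S: "S \<in> XX" "S \<inter> X \<noteq> {}" "S \<inter> Y \<noteq> {}"
        unfolding merge_rel_def by blast
      then have XY: "X \<in> components V (F t)" "Y \<in> components V (F t)"
        using active_sets_subset_components by blast+
      obtain u v where "u \<in> S" "u \<in> X" "v \<in> S" "v \<in> Y" using S(2,3) by blast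
      moreover have "actively_connected_set V D F b S" using S(1) assms(3) by blast
      ultimately have "(u, v) \<in> ?P" by (auto simp: actively_connected_set_def)
      moreover have "X = comp_of V (F t) u" "Y = comp_of V (F t) v"
        using XY \<open>u \<in> X\<close> \<open>v \<in> Y\<close> by (auto simp: components_def comp_of_eq_if_mem)
      ultimately show "p \<in> Id" using same p by auto
    qed
  qed
qed

lemma set_integrable_bounded_eventually_zero:
  fixes f :: "real \<Rightarrow> real"
  assumes "f \<in> borel_measurable (restrict_space lborel {0..})"
    and "\<And>t. 0 \<le> t \<Longrightarrow> \<bar>f t\<bar> \<le> B" and "eventually (\<lambda>t. f t = 0) at_top"
  shows "set_integrable lborel {0..} f"
proof -
  obtain T where T: "\<And>t. T \<le> t \<Longrightarrow> f t = 0"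
    using assms(3) unfolding eventually_at_top_linorder by blast
  show ?thesis unfolding set_integrable_def
  proof (rule integrableI_bounded_set[where A = "{0..T}" and B = B])
    show "(\<lambda>t. indicator {0..} t *\<^sub>R f t) \<in> borel_measurable lborel"
      using assms(1) by (simp add: borel_measurable_restrict_space_iff)
    show "AE t in lborel. t \<in> {0..T} \<longrightarrow> norm (indicator {0..} t *\<^sub>R f t) \<le> B"
    proof (rule AE_I2, rule impI)
      fix t :: real assume "t \<in> {0..T}"
      then show "norm (indicator {0..} t *\<^sub>R f t) \<le> B" using assms(2)[of t] by simp
    qed
    show "AE t in lborel. t \<notin> {0..T} \<longrightarrow> indicator {0..} t *\<^sub>R f t = 0"
    proof (rule AE_I2, rule impI)
      fix t :: real assume "t \<notin> {0..T}"
      then have "t < 0 \<or> T \<le> t" by auto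
      then show "indicator {0..} t *\<^sub>R f t = 0" using T[of t] by (auto simp: indicator_def)
    qed
  qed (simp_all add: emeasure_lborel_Icc_eq)
qed

lemma set_integrable_merge_loss:
  assumes "finite V" "finite E" "moat_run V E c D \<epsilon> F b"
    and "XX \<subseteq> {S. actively_connected_set V D F b S}"
  shows "set_integrable lborel {0..} (\<lambda>t. merge_loss (active_sets V D F b t) XX)"
proof (rule set_integrable_bounded_eventually_zero[where B = "real (card (Pow V))"])
  have "(\<lambda>A. merge_loss A XX) \<in> borel_measurable (count_space (Pow (Pow V)))"
    by simp
  with measurable_active_sets[OF assms(1-3)]
  show "(\<lambda>t. merge_loss (active_sets V D F b t) XX) \<in> borel_measurable (restrict_space lborel {0..})"
    by (rule measurable_compose)
  fix t :: real
  have "card (merge_by (active_sets V D F b t) XX) \<le> card (active_sets V D F b t)"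
    by (rule card_merge_by_le[OF finite_active_sets[OF assms(1)]])
  moreover have "card (active_sets V D F b t) \<le> card (Pow V)"
    using assms(1) by (intro card_mono active_sets_subset_Pow) simp
  ultimately show "\<bar>merge_loss (active_sets V D F b t) XX\<bar> \<le> real (card (Pow V))"
    unfolding merge_loss_def by linarith
next
  show "eventually (\<lambda>t. merge_loss (active_sets V D F b t) XX = 0) at_top"
    using eventually_merge_by_active_sets_trivial[OF assms(1,3,4)]
    by (rule eventually_mono) (simp add: merge_loss_def)
qed

lemma set_integral_add_mono:
  fixes f g h k :: "'a \<Rightarrow> real"
  assumes "set_integrable M A f" "set_integrable M A g" "set_integrable M A h" "set_integrable M A k"
    and "\<And>x. x \<in> A \<Longrightarrow> f x + g x \<le> h x + k x"
  shows "(LINT x:A|M. f x) + (LINT x:A|M. g x) \<le> (LINT x:A|M. h x) + (LINT x:A|M. k x)"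
proof -
  have "(LINT x:A|M. f x) + (LINT x:A|M. g x) = (LINT x:A|M. f x + g x)"
    using set_integral_add(2)[OF assms(1,2)] by simp
  also have "\<dots> \<le> (LINT x:A|M. h x + k x)"
    by (intro set_integral_mono set_integral_add assms)
  also have "\<dots> = (LINT x:A|M. h x) + (LINT x:A|M. k x)"
    using set_integral_add(2)[OF assms(3,4)] by simp
  finally show ?thesis .
qed

lemma gain_eq_merge_loss: "gain V D F b SS = 2 * (LBINT t:{0..}. merge_loss (active_sets V D F b t) SS)"
  by (simp add: gain_def merge_loss_def)

theorem lemma3p5:
  fixes V :: "'v set" and E :: "'v set set" and c :: "'v set \<Rightarrow> real"
    and D :: "'v set set" and \<epsilon> :: real
    and F :: "real \<Rightarrow> 'v set set" and b :: "real \<Rightarrow> 'v set \<Rightarrow> real"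
  assumes "finite V"
    and "\<forall>e\<in>E. e \<subseteq> V \<and> card e = 2"
    and "\<forall>e\<in>E. c e \<ge> 0"
    and "\<forall>d\<in>D. d \<subseteq> V \<and> card d = 2"
    and "\<epsilon> \<ge> 0"
    and "moat_run V E c D \<epsilon> F b"
  shows "\<forall>SS TT. SS \<subseteq> {S. actively_connected_set V D F b S} \<longrightarrow>
                TT \<subseteq> {S. actively_connected_set V D F b S} \<longrightarrow>
           gain V D F b (SS \<union> TT) + gain V D F b (SS \<inter> TT) \<le> gain V D F b SS + gain V D F b TT"
proof (intro allI impI)
  fix SS TT
  assume SS: "SS \<subseteq> {S. actively_connected_set V D F b S}"
    and TT: "TT \<subseteq> {S. actively_connected_set V D F b S}"
  have "E \<subseteq> Pow V" using assms(2) by blast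
  then have "finite E" by (rule finite_subset) (simp add: assms(1))
  then have integrable: "set_integrable lborel {0..} (\<lambda>t. merge_loss (active_sets V D F b t) XX)"
    if "XX \<subseteq> SS \<union> TT" for XX
    by (rule set_integrable_merge_loss[OF assms(1) _ assms(6)]) (use SS TT that in blast)
  have "TT \<subseteq> Pow V" using TT by (auto simp: actively_connected_set_def)
  then have "finite TT" by (rule finite_subset) (simp add: assms(1))
  have "(LBINT t:{0..}. merge_loss (active_sets V D F b t) (SS \<union> TT))
      + (LBINT t:{0..}. merge_loss (active_sets V D F b t) (SS \<inter> TT))
      \<le> (LBINT t:{0..}. merge_loss (active_sets V D F b t) SS)
      + (LBINT t:{0..}. merge_loss (active_sets V D F b t) TT)"
    by (intro set_integral_add_mono integrable merge_loss_submodular finite_active_sets assms(1)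
        empty_notin_active_sets disjoint_active_sets \<open>finite TT\<close>) blast+
  then show "gain V D F b (SS \<union> TT) + gain V D F b (SS \<inter> TT) \<le> gain V D F b SS + gain V D F b TT"
    unfolding gain_eq_merge_loss by linarith
qed

end
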